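(* Let $G$ be a connected graph with $n\geq 2$ vertices and $m$ edges. Then for every integer $k\geq 0$, $$R^*(S^k(G))=8^kR^*(G)+\frac{8^k-2^k}{3}m(2m-2n+1).$$
   Context: All graphs are finite, undirected, without loops or multiple edges. For a connected graph $H$ and vertices $i,j$, the resistance distance $\Omega_{ij}$ is the effective resistance between $i$ and $j$ in the electrical network obtained from $H$ by replacing each edge by a unit resistor. With $d_i$ the degree of vertex $i$ in $H$ and the sum over unordered pairs of distinct vertices of $H$, the multiplicative degree-Kirchhoff index is $R^*(H)=\sum_{\{i,j\}\subseteq V(H)}d_id_j\Omega_{ij}$ (degrees and resistances taken in $H$). The subdivision $S(H)$ is the graph obtained from $H$ by replacing every edge with a path of length two. Iterated subdivisions: $S^0(G)=G$ and $S^k(G)=S(S^{k-1}(G))$ for $k\geq1$. *)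

theory Defs
  imports Complex_Main "HOL-Library.Uprod"
begin

type_synonym 'a graph = "'a set \<times> 'a set set"

definition simple_graph :: "'a graph \<Rightarrow> bool" where
  "simple_graph G \<longleftrightarrow> finite (fst G) \<and>
     (\<forall>e\<in>snd G. \<exists>u v. e = {u, v} \<and> u \<noteq> v \<and> u \<in> fst G \<and> v \<in> fst G)"

definition adj :: "'a graph \<Rightarrow> 'a \<Rightarrow> 'a \<Rightarrow> bool" where
  "adj G u v \<longleftrightarrow> {u, v} \<in> snd G"

definition connected_graph :: "'a graph \<Rightarrow> bool" where
  "connected_graph G \<longleftrightarrow> fst G \<noteq> {} \<and> (\<forall>u\<in>fst G. \<forall>v\<in>fst G. (adj G)\<^sup>*\<^sup>* u v)"

definition degree :: "'a graph \<Rightarrow> 'a \<Rightarrow> nat" where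
  "degree G v = card {e \<in> snd G. v \<in> e}"

text \<open>Effective resistance: inject a unit current at i and extract it at j; the
 node potentials x satisfy Kirchhoff's current law with unit resistors on every
 edge, and the effective resistance is the potential difference x i - x j
 (well defined for connected graphs).\<close>
definition resistance :: "'a graph \<Rightarrow> 'a \<Rightarrow> 'a \<Rightarrow> real" where
  "resistance G i j = (THE r. \<exists>x :: 'a \<Rightarrow> real.
      (\<forall>v\<in>fst G. (\<Sum>w\<in>{w \<in> fst G. {v, w} \<in> snd G}. x v - x w)
                   = (if v = i then 1 else 0) - (if v = j then 1 else 0))
      \<and> r = x i - x j)"

text \<open>Multiplicative degree-Kirchhoff index; the sum over unordered pairs of
 distinct vertices is written as half the sum over ordered pairs.\<close>
definition Rstar :: "'a graph \<Rightarrow> real" where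
  "Rstar G = (\<Sum>(i, j)\<in>{(i, j). i \<in> fst G \<and> j \<in> fst G \<and> i \<noteq> j}.
       real (degree G i) * real (degree G j) * resistance G i j) / 2"

text \<open>Vertex universe closed under subdivision: original vertices, and
 midpoint vertices labelled by the (unordered) edge they subdivide.\<close>
datatype 'a sv = Orig 'a | Mid "'a sv uprod"

definition to_upair :: "'a set \<Rightarrow> 'a uprod" where
  "to_upair e = (THE p. set_uprod p = e)"

definition subdivision :: "'a sv graph \<Rightarrow> 'a sv graph" where
  "subdivision G = (fst G \<union> (\<lambda>e. Mid (to_upair e)) ` snd G,
     {{u, Mid (to_upair e)} | u e. e \<in> snd G \<and> u \<in> e})"

definition lift_graph :: "'a graph \<Rightarrow> 'a sv graph" where
  "lift_graph G = (Orig ` fst G, (\<lambda>e. Orig ` e) ` snd G)"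

text \<open>S^k(G), with S^0(G) = G (up to the relabelling v \<mapsto> Orig v).\<close>
definition iter_subdivision :: "nat \<Rightarrow> 'a graph \<Rightarrow> 'a sv graph" where
  "iter_subdivision k G = (subdivision ^^ k) (lift_graph G)"

end

theory Submission
  imports Defs "Jordan_Normal_Form.Determinant"
begin

text \<open>Ground a vertex \<open>r\<close> and let \<open>\<phi> u\<close> be the potential of a unit current from \<open>u\<close> to \<open>r\<close>.
  Then \<open>\<Omega>(i, j) = \<phi> i i - \<phi> j i - \<phi> i j + \<phi> j j\<close>, which turns \<open>R\<^sup>*(H)\<close> into
  \<open>2m \<Sum>\<^sub>v d(v) \<phi> v v - \<Sum>\<^sub>u\<^sub>,\<^sub>w d(u) d(w) \<phi> u w\<close>.
  For \<open>S(H)\<close> such a grounded Green function can be written down explicitly in terms of \<open>\<phi>\<close>: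
  potentials are doubled at old vertices and interpolated at midpoints, and a source at a
  midpoint is the average of the sources at its two ends plus \<open>1/2\<close> at the midpoint itself.
  Substituting, and using that the sum of \<open>\<phi> v w\<close> over adjacent pairs equals
  \<open>\<Sum>\<^sub>v d(v) \<phi> v v - (n - 1)\<close>, yields \<open>R\<^sup>*(S(H)) = 8 R\<^sup>*(H) + 2m(2m - 2n + 1)\<close>.
  Subdivision doubles \<open>m\<close> and adds \<open>m\<close> to \<open>n\<close>, so \<open>2m - 2n + 1\<close> is invariant and the
  recurrence solves to the stated formula.\<close>

section \<open>Injective linear systems are solvable\<close>

lemma mult_mat_vec_reindex:
  fixes K :: "'v \<Rightarrow> 'v \<Rightarrow> real"
  assumes h: "bij_betw h {0..<n} V" and i: "i < n"
  shows "(mat n n (\<lambda>(i, j). K (h i) (h j)) *\<^sub>v vec n (\<lambda>j. x (h j))) $ i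
           = (\<Sum>w\<in>V. K (h i) w * x w)"
proof -
  have "(mat n n (\<lambda>(i, j). K (h i) (h j)) *\<^sub>v vec n (\<lambda>j. x (h j))) $ i
          = (\<Sum>j\<in>{0..<n}. K (h i) (h j) * x (h j))"
    using i by (simp add: scalar_prod_def row_def)
  also have "\<dots> = (\<Sum>w\<in>V. K (h i) w * x w)"
    using sum.reindex_bij_betw[OF h, of "\<lambda>w. K (h i) w * x w"] by simp
  finally show ?thesis .
qed

lemma injective_linear_system_solvable:
  fixes K :: "'v \<Rightarrow> 'v \<Rightarrow> real"
  assumes "finite V"
    and inj: "\<And>x. \<forall>v\<in>V. (\<Sum>w\<in>V. K v w * x w) = 0 \<Longrightarrow> \<forall>v\<in>V. x v = 0"
  shows "\<exists>x. \<forall>v\<in>V. (\<Sum>w\<in>V. K v w * x w) = b v"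
proof -
  obtain h where h: "bij_betw h {0..<card V} V"
    using ex_bij_betw_nat_finite[OF \<open>finite V\<close>] by blast
  define n where "n = card V"
  define g where "g = the_inv_into {0..<n} h"
  have hg: "g (h i) = i" "h i \<in> V" if "i < n" for i
    using that h by (auto simp: g_def n_def bij_betw_def the_inv_into_f_f)
  have gh: "g w < n \<and> h (g w) = w" if "w \<in> V" for w
    using that h unfolding g_def n_def
    by (metis atLeastLessThan_iff bij_betw_def f_the_inv_into_f the_inv_into_into order_refl)
  define A where "A = mat n n (\<lambda>(i, j). K (h i) (h j))"
  have A: "A \<in> carrier_mat n n" by (simp add: A_def)
  have reidx: "(A *\<^sub>v y) $ g v = (\<Sum>w\<in>V. K v w * y $ g w)"
    if "y \<in> carrier_vec n" "v \<in> V" for y v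
  proof -
    have "y = vec n (\<lambda>j. y $ g (h j))"
      using that(1) hg by (intro eq_vecI) auto
    then show ?thesis
      using mult_mat_vec_reindex[OF h[folded n_def], of "g v" K "\<lambda>w. y $ g w"] gh that(2)
      by (simp add: A_def)
  qed
  have "det A \<noteq> 0"
  proof
    assume "det A = 0"
    then obtain y where y: "y \<in> carrier_vec n" "y \<noteq> 0\<^sub>v n" "A *\<^sub>v y = 0\<^sub>v n"
      using det_0_iff_vec_prod_zero[OF A] by blast
    have "\<forall>v\<in>V. y $ g v = 0"
      using inj[of "\<lambda>w. y $ g w"] reidx[OF y(1)] y(3) gh by simp
    then have "y $ i = 0" if "i < n" for i using hg[OF that] by metis
    then have "y = 0\<^sub>v n" using y(1) by (intro eq_vecI) auto
    with y(2) show False ..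
  qed
  then obtain B where B: "B \<in> carrier_mat n n" and AB: "A * B = 1\<^sub>m n"
    using det_non_zero_imp_unit[OF A] by (auto simp: Units_def ring_mat_def)
  define y where "y = B *\<^sub>v vec n (\<lambda>i. b (h i))"
  have y: "y \<in> carrier_vec n" using B by (simp add: y_def)
  have "A *\<^sub>v y = vec n (\<lambda>i. b (h i))"
    unfolding y_def using A B AB
    by (metis assoc_mult_mat_vec one_mult_mat_vec vec_carrier)
  then have "\<forall>v\<in>V. (\<Sum>w\<in>V. K v w * y $ g w) = b v"
    using reidx[OF y] gh by simp
  then show ?thesis by (intro exI[of _ "\<lambda>w. y $ g w"])
qed

section \<open>Simple graphs\<close>

lemma simple_graph_finite_vertices: "simple_graph H \<Longrightarrow> finite (fst H)"
  by (simp add: simple_graph_def)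

lemma simple_graph_edgeE:
  assumes "simple_graph H" "e \<in> snd H"
  obtains u v where "e = {u, v}" "u \<noteq> v" "u \<in> fst H" "v \<in> fst H"
  using assms by (auto simp: simple_graph_def)

lemma simple_graph_edge_vertex: "simple_graph H \<Longrightarrow> e \<in> snd H \<Longrightarrow> u \<in> e \<Longrightarrow> u \<in> fst H"
  by (auto elim: simple_graph_edgeE)

lemma simple_graph_card_edge: "simple_graph H \<Longrightarrow> e \<in> snd H \<Longrightarrow> card e = 2"
  by (auto elim: simple_graph_edgeE)

lemma simple_graph_finite_edges: "simple_graph H \<Longrightarrow> finite (snd H)"
  by (rule finite_subset[of _ "Pow (fst H)"])
     (auto simp: simple_graph_finite_vertices intro: simple_graph_edge_vertex)

definition nbrs :: "'v graph \<Rightarrow> 'v \<Rightarrow> 'v set" where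
  "nbrs H v = {w \<in> fst H. {v, w} \<in> snd H}"

lemma nbrs_subset: "nbrs H v \<subseteq> fst H"
  by (auto simp: nbrs_def)

lemma finite_nbrs: "simple_graph H \<Longrightarrow> finite (nbrs H v)"
  using nbrs_subset simple_graph_finite_vertices finite_subset by metis

lemma nbrs_sym: "w \<in> nbrs H v \<Longrightarrow> v \<in> fst H \<Longrightarrow> v \<in> nbrs H w"
  by (auto simp: nbrs_def insert_commute)

lemma self_notin_nbrs: "simple_graph H \<Longrightarrow> v \<notin> nbrs H v"
  by (auto simp: nbrs_def elim: simple_graph_edgeE)

lemma edge_eq_insert_nbr:
  assumes "simple_graph H" "e \<in> snd H" "v \<in> e"
  obtains w where "e = {v, w}" "w \<in> nbrs H v"
proof -
  obtain a b where ab: "e = {a, b}" "a \<in> fst H" "b \<in> fst H"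
    using assms(1,2) by (auto elim: simple_graph_edgeE)
  show thesis
  proof (cases "v = a")
    case True
    then show thesis using that[of b] ab assms(2) by (auto simp: nbrs_def)
  next
    case False
    then show thesis using that[of a] ab assms(2,3) by (auto simp: nbrs_def insert_commute)
  qed
qed

lemma degree_eq_card_nbrs:
  assumes H: "simple_graph H"
  shows "Defs.degree H v = card (nbrs H v)"
proof -
  have "bij_betw (\<lambda>w. {v, w}) (nbrs H v) {e \<in> snd H. v \<in> e}"
  proof (rule bij_betwI')
    show "({v, x} = {v, y}) = (x = y)" if "x \<in> nbrs H v" "y \<in> nbrs H v" for x y
      using that self_notin_nbrs[OF H] by (auto simp: doubleton_eq_iff)
  qed (auto simp: nbrs_def elim!: edge_eq_insert_nbr[OF H])
  then show ?thesis
    by (simp add: Defs.degree_def bij_betw_same_card)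
qed

lemma sum_nbrs_swap:
  assumes H: "simple_graph H"
  shows "(\<Sum>v\<in>fst H. \<Sum>w\<in>nbrs H v. f v w) = (\<Sum>v\<in>fst H. \<Sum>w\<in>nbrs H v. f w v)"
proof -
  define P where "P = Sigma (fst H) (nbrs H)"
  have "bij_betw prod.swap P P"
    unfolding P_def
    by (rule bij_betwI[where g = prod.swap]) (auto intro: nbrs_sym dest: subsetD[OF nbrs_subset])
  from sum.reindex_bij_betw[OF this, of "\<lambda>(v, w). f v w"] show ?thesis
    by (simp add: P_def sum.Sigma finite_nbrs[OF H] simple_graph_finite_vertices[OF H]
        case_prod_unfold)
qed

lemma sum_nbrs_eq_sum_edges:
  fixes h :: "'v set \<Rightarrow> real"
  assumes H: "simple_graph H"
  shows "(\<Sum>v\<in>fst H. \<Sum>w\<in>nbrs H v. h {v, w}) = 2 * (\<Sum>e\<in>snd H. h e)"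
proof -
  define P where "P = Sigma (fst H) (nbrs H)"
  have fin: "finite P"
    by (simp add: P_def finite_nbrs[OF H] simple_graph_finite_vertices[OF H])
  have "(\<lambda>(v, w). {v, w}) ` P \<subseteq> snd H"
    by (auto simp: P_def nbrs_def)
  from sum.group[OF fin simple_graph_finite_edges[OF H] this, of "\<lambda>(v, w). h {v, w}"]
  have "(\<Sum>(v, w)\<in>P. h {v, w})
          = (\<Sum>e\<in>snd H. \<Sum>p\<in>{p \<in> P. (\<lambda>(v, w). {v, w}) p = e}. (\<lambda>(v, w). h {v, w}) p)"
    by simp
  also have "\<dots> = (\<Sum>e\<in>snd H. 2 * h e)"
  proof (rule sum.cong[OF refl])
    fix e assume e: "e \<in> snd H"
    then obtain a b where ab: "e = {a, b}" "a \<noteq> b" "a \<in> fst H" "b \<in> fst H"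
      using H by (auto elim: simple_graph_edgeE)
    then have "{p \<in> P. (\<lambda>(v, w). {v, w}) p = e} = {(a, b), (b, a)}"
      using e by (auto simp: P_def nbrs_def doubleton_eq_iff insert_commute)
    then show "(\<Sum>p\<in>{p \<in> P. (\<lambda>(v, w). {v, w}) p = e}. (\<lambda>(v, w). h {v, w}) p) = 2 * h e"
      using ab by (simp add: insert_commute)
  qed
  finally show ?thesis
    by (simp add: P_def sum.Sigma finite_nbrs[OF H] simple_graph_finite_vertices[OF H]
        sum_distrib_left)
qed

lemma sum_degree_mult:
  "simple_graph H \<Longrightarrow> (\<Sum>v\<in>fst H. real (Defs.degree H v) * f v) = (\<Sum>v\<in>fst H. \<Sum>w\<in>nbrs H v. f v)"
  by (simp add: degree_eq_card_nbrs)

lemma sum_degree: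
  assumes "simple_graph H"
  shows "(\<Sum>v\<in>fst H. real (Defs.degree H v)) = 2 * real (card (snd H))"
  using sum_degree_mult[OF assms, of "\<lambda>_. 1"] sum_nbrs_eq_sum_edges[OF assms, of "\<lambda>_. 1"]
  by simp

lemma sum_edges_sum_ends:
  assumes H: "simple_graph H"
  shows "(\<Sum>e\<in>snd H. \<Sum>a\<in>e. f a) = (\<Sum>v\<in>fst H. real (Defs.degree H v) * f v)"
proof -
  have "2 * (\<Sum>e\<in>snd H. \<Sum>a\<in>e. f a) = (\<Sum>v\<in>fst H. \<Sum>w\<in>nbrs H v. \<Sum>a\<in>{v, w}. f a)"
    using sum_nbrs_eq_sum_edges[OF H, of "\<lambda>e. \<Sum>a\<in>e. f a"] by simp
  also have "\<dots> = (\<Sum>v\<in>fst H. \<Sum>w\<in>nbrs H v. f v + f w)"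
  proof (intro sum.cong refl)
    fix v w assume "w \<in> nbrs H v"
    then have "v \<noteq> w" using self_notin_nbrs[OF H] by blast
    then show "(\<Sum>a\<in>{v, w}. f a) = f v + f w" by simp
  qed
  also have "\<dots> = 2 * (\<Sum>v\<in>fst H. \<Sum>w\<in>nbrs H v. f v)"
    using sum_nbrs_swap[OF H, of "\<lambda>v w. f w"] by (simp add: sum.distrib)
  finally show ?thesis
    using sum_degree_mult[OF H] by simp
qed

section \<open>Laplacian, potentials and effective resistance\<close>

definition laplacian :: "'v graph \<Rightarrow> ('v \<Rightarrow> real) \<Rightarrow> 'v \<Rightarrow> real" where
  "laplacian H x v = (\<Sum>w\<in>nbrs H v. x v - x w)"

definition unit_current :: "'v \<Rightarrow> 'v \<Rightarrow> 'v \<Rightarrow> real" where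
  "unit_current i j v = (if v = i then 1 else 0) - (if v = j then 1 else 0)"

lemma laplacian_diff: "laplacian H (\<lambda>w. x w - y w) v = laplacian H x v - laplacian H y v"
  by (simp add: laplacian_def sum_subtractf[symmetric] algebra_simps)

lemma laplacian_add: "laplacian H (\<lambda>w. x w + y w) v = laplacian H x v + laplacian H y v"
  by (simp add: laplacian_def sum.distrib[symmetric] algebra_simps)

lemma laplacian_scale: "laplacian H (\<lambda>w. c * x w) v = c * laplacian H x v"
  by (simp add: laplacian_def sum_distrib_left right_diff_distrib)

lemma laplacian_sum: "laplacian H (\<lambda>w. \<Sum>a\<in>A. f a w) v = (\<Sum>a\<in>A. laplacian H (f a) v)"
  unfolding laplacian_def sum_subtractf[symmetric] by (rule sum.swap)

lemma sum_laplacian: "simple_graph H \<Longrightarrow> (\<Sum>v\<in>fst H. laplacian H x v) = 0"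
  using sum_nbrs_swap[of H "\<lambda>v w. x v"] by (simp add: laplacian_def sum_subtractf)

lemma laplacian_eq_matrix:
  assumes H: "simple_graph H" and v: "v \<in> fst H"
  shows "laplacian H x v = (\<Sum>w\<in>fst H.
           (of_bool (w = v) * real (card (nbrs H v)) - of_bool (w \<in> nbrs H v)) * x w)"
proof -
  have fin: "finite (fst H)" using simple_graph_finite_vertices[OF H] .
  have "fst H \<inter> {w. w = v} = {v}" "fst H \<inter> {w. w \<in> nbrs H v} = nbrs H v"
    using v nbrs_subset[of H v] by auto
  then show ?thesis
    using fin by (simp add: laplacian_def left_diff_distrib sum_subtractf mult.assoc)
qed

lemma harmonic_imp_constant:
  assumes H: "simple_graph H" and conn: "connected_graph H"
    and harmonic: "\<forall>v\<in>fst H. laplacian H x v = 0"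
    and u: "u \<in> fst H" and v: "v \<in> fst H"
  shows "x u = x v"
proof -
  have fin: "finite (x ` fst H)" using simple_graph_finite_vertices[OF H] by simp
  define M where "M = Max (x ` fst H)"
  have le: "x w \<le> M" if "w \<in> fst H" for w
    unfolding M_def using fin that by (intro Max_ge) auto
  have "M \<in> x ` fst H"
    unfolding M_def using fin u by (intro Max_in) auto
  then obtain v0 where v0: "v0 \<in> fst H" "x v0 = M" by (metis imageE)
  \<comment> \<open>maximum principle\<close>
  have max_step: "x b = M" if ab: "adj H a b" and a: "x a = M" for a b
  proof -
    have "{a, b} \<in> snd H" using ab by (simp add: adj_def)
    then have "a \<in> fst H" "b \<in> nbrs H a"
      using simple_graph_edge_vertex[OF H] by (auto simp: nbrs_def)
    have "(\<Sum>w\<in>nbrs H a. x a - x w) = 0"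
      using harmonic \<open>a \<in> fst H\<close> by (simp add: laplacian_def)
    moreover have nonneg: "0 \<le> x a - x w" if "w \<in> nbrs H a" for w
      using le a nbrs_subset[of H a] that by auto
    ultimately have "x a - x b = 0"
      using sum_nonneg_eq_0_iff[OF finite_nbrs[OF H] nonneg] \<open>b \<in> nbrs H a\<close> by simp
    then show "x b = M"
      using a by simp
  qed
  have "x w = M" if "(adj H)\<^sup>*\<^sup>* v0 w" for w
    using that
  proof (induction rule: rtranclp_induct)
    case base
    then show ?case using v0 by simp
  next
    case (step y z)
    then show ?case using max_step by blast
  qed
  moreover have "(adj H)\<^sup>*\<^sup>* v0 u" "(adj H)\<^sup>*\<^sup>* v0 v"
    using conn u v v0(1) by (auto simp: connected_graph_def)
  ultimately show ?thesis by simp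
qed

lemma laplacian_grounded:
  assumes H: "simple_graph H" and t: "t \<in> fst H" and b: "(\<Sum>v\<in>fst H. b v) = 0"
    and x: "\<forall>v\<in>fst H. laplacian H x v + of_bool (v = t) * x t = b v"
  shows "x t = 0" and "\<forall>v\<in>fst H. laplacian H x v = b v"
proof -
  have "0 = (\<Sum>v\<in>fst H. laplacian H x v + of_bool (v = t) * x t)"
    using x b by simp
  also have "\<dots> = x t"
    using sum_laplacian[OF H] t simple_graph_finite_vertices[OF H] by (simp add: sum.distrib)
  finally show "x t = 0" ..
  then show "\<forall>v\<in>fst H. laplacian H x v = b v"
    using x by simp
qed

text \<open>Grounding the singular Laplacian at one vertex \<open>t\<close> makes it injective, hence invertible.\<close>

lemma laplacian_solvable:
  assumes H: "simple_graph H" and conn: "connected_graph H" and b: "(\<Sum>v\<in>fst H. b v) = 0"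
  shows "\<exists>x. \<forall>v\<in>fst H. laplacian H x v = b v"
proof -
  obtain t where t: "t \<in> fst H" using conn by (auto simp: connected_graph_def)
  define K where "K v w = of_bool (w = v) * real (card (nbrs H v)) - of_bool (w \<in> nbrs H v)
      + of_bool (v = t \<and> w = t)" for v w
  have K: "(\<Sum>w\<in>fst H. K v w * x w) = laplacian H x v + of_bool (v = t) * x t"
    if "v \<in> fst H" for v x
  proof -
    have "(\<Sum>w\<in>fst H. of_bool (v = t \<and> w = t) * x w) = of_bool (v = t) * x t"
    proof (cases "v = t")
      case True
      have "fst H \<inter> {w. w = t} = {t}" using t by auto
      with True show ?thesis using simple_graph_finite_vertices[OF H] by simp
    qed simp
    then show ?thesis
      by (simp add: K_def distrib_right sum.distrib laplacian_eq_matrix[OF H that])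
  qed
  have inj: "\<forall>v\<in>fst H. x v = 0" if "\<forall>v\<in>fst H. (\<Sum>w\<in>fst H. K v w * x w) = 0" for x
  proof -
    have "\<forall>v\<in>fst H. laplacian H x v + of_bool (v = t) * x t = 0"
      using that K by simp
    from laplacian_grounded[OF H t _ this]
    have "x t = 0" and harmonic: "\<forall>v\<in>fst H. laplacian H x v = 0" by simp_all
    then show ?thesis using harmonic_imp_constant[OF H conn harmonic _ t] by simp
  qed
  obtain x where "\<forall>v\<in>fst H. (\<Sum>w\<in>fst H. K v w * x w) = b v"
    using injective_linear_system_solvable[OF simple_graph_finite_vertices[OF H] inj] by blast
  then have "\<forall>v\<in>fst H. laplacian H x v + of_bool (v = t) * x t = b v"
    using K by simp
  with laplacian_grounded(2)[OF H t b] show ?thesis by blast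
qed

lemma unit_current_potential_exists:
  assumes H: "simple_graph H" and conn: "connected_graph H" and ij: "i \<in> fst H" "j \<in> fst H"
  shows "\<exists>x. \<forall>v\<in>fst H. laplacian H x v = unit_current i j v"
  using ij simple_graph_finite_vertices[OF H]
  by (intro laplacian_solvable[OF H conn]) (simp add: unit_current_def sum_subtractf)

lemma resistance_eqI:
  assumes H: "simple_graph H" and conn: "connected_graph H" and ij: "i \<in> fst H" "j \<in> fst H"
    and x: "\<forall>v\<in>fst H. laplacian H x v = unit_current i j v"
  shows "resistance H i j = x i - x j"
  unfolding resistance_def
proof (rule the_equality)
  show "\<exists>x'. (\<forall>v\<in>fst H. (\<Sum>w\<in>{w \<in> fst H. {v, w} \<in> snd H}. x' v - x' w) =
          (if v = i then 1 else 0) - (if v = j then 1 else 0)) \<and> x i - x j = x' i - x' j"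
    using x by (intro exI[of _ x]) (simp add: laplacian_def nbrs_def unit_current_def)
next
  fix r :: real assume "\<exists>y. (\<forall>v\<in>fst H. (\<Sum>w\<in>{w \<in> fst H. {v, w} \<in> snd H}. y v - y w) =
          (if v = i then 1 else 0) - (if v = j then 1 else 0)) \<and> r = y i - y j"
  then obtain y where y: "\<forall>v\<in>fst H. laplacian H y v = unit_current i j v" and r: "r = y i - y j"
    by (auto simp: laplacian_def nbrs_def unit_current_def)
  have "\<forall>v\<in>fst H. laplacian H (\<lambda>w. y w - x w) v = 0"
    using x y by (simp add: laplacian_diff)
  from harmonic_imp_constant[OF H conn this ij] show "r = x i - x j"
    using r by simp
qed

definition green_function :: "'v graph \<Rightarrow> 'v \<Rightarrow> ('v \<Rightarrow> 'v \<Rightarrow> real) \<Rightarrow> bool" where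
  "green_function H r \<phi> \<longleftrightarrow> (\<forall>u\<in>fst H. \<forall>v\<in>fst H. laplacian H (\<phi> u) v = unit_current u r v)"

lemma green_function_exists:
  assumes H: "simple_graph H" and conn: "connected_graph H" and r: "r \<in> fst H"
  shows "\<exists>\<phi>. green_function H r \<phi>"
proof -
  have "\<forall>u\<in>fst H. \<exists>x. \<forall>v\<in>fst H. laplacian H x v = unit_current u r v"
    using unit_current_potential_exists[OF H conn _ r] by blast
  then show ?thesis
    unfolding green_function_def by (rule bchoice)
qed

lemma resistance_green:
  assumes H: "simple_graph H" and conn: "connected_graph H" and \<phi>: "green_function H r \<phi>"
    and ij: "i \<in> fst H" "j \<in> fst H"
  shows "resistance H i j = \<phi> i i - \<phi> j i - \<phi> i j + \<phi> j j"
proof -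
  have "\<forall>v\<in>fst H. laplacian H (\<lambda>w. \<phi> i w - \<phi> j w) v = unit_current i j v"
    unfolding laplacian_diff using \<phi> ij by (simp add: green_function_def unit_current_def)
  from resistance_eqI[OF H conn ij this] show ?thesis by simp
qed

lemma Rstar_green:
  assumes H: "simple_graph H" and conn: "connected_graph H" and \<phi>: "green_function H r \<phi>"
  shows "Rstar H = 2 * real (card (snd H)) * (\<Sum>v\<in>fst H. real (Defs.degree H v) * \<phi> v v)
     - (\<Sum>u\<in>fst H. \<Sum>w\<in>fst H. real (Defs.degree H u) * real (Defs.degree H w) * \<phi> u w)"
proof -
  let ?V = "fst H"
  let ?d = "\<lambda>v. real (Defs.degree H v)"
  define A where "A = (\<Sum>v\<in>?V. ?d v * \<phi> v v)"
  define B where "B = (\<Sum>u\<in>?V. \<Sum>w\<in>?V. ?d u * ?d w * \<phi> u w)"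
  have fin: "finite ?V" using simple_graph_finite_vertices[OF H] .
  have "(\<Sum>(i, j)\<in>{(i, j). i \<in> ?V \<and> j \<in> ?V \<and> i \<noteq> j}. ?d i * ?d j * resistance H i j)
      = (\<Sum>i\<in>?V. \<Sum>j\<in>?V. ?d i * ?d j * (\<phi> i i - \<phi> j i - \<phi> i j + \<phi> j j))"
    using fin by (subst sum.cartesian_product, intro sum.mono_neutral_cong_left)
      (auto simp: resistance_green[OF H conn \<phi>])
  also have "\<dots> = (\<Sum>i\<in>?V. \<Sum>j\<in>?V. ?d j * (?d i * \<phi> i i)) + (\<Sum>i\<in>?V. \<Sum>j\<in>?V. ?d i * (?d j * \<phi> j j))
      - (\<Sum>i\<in>?V. \<Sum>j\<in>?V. ?d j * ?d i * \<phi> j i) - (\<Sum>i\<in>?V. \<Sum>j\<in>?V. ?d i * ?d j * \<phi> i j)"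
  proof -
    have "?d i * ?d j * (\<phi> i i - \<phi> j i - \<phi> i j + \<phi> j j) = ?d j * (?d i * \<phi> i i)
        + ?d i * (?d j * \<phi> j j) - ?d j * ?d i * \<phi> j i - ?d i * ?d j * \<phi> i j" for i j
      by (simp add: algebra_simps)
    then show ?thesis by (simp only: sum_subtractf sum.distrib)
  qed
  also have "(\<Sum>i\<in>?V. \<Sum>j\<in>?V. ?d j * (?d i * \<phi> i i)) = (\<Sum>j\<in>?V. ?d j) * A"
    by (simp add: A_def sum_distrib_left[symmetric] sum_distrib_right[symmetric])
  also have "(\<Sum>i\<in>?V. \<Sum>j\<in>?V. ?d i * (?d j * \<phi> j j)) = (\<Sum>j\<in>?V. ?d j) * A"
    by (simp add: A_def sum_distrib_left[symmetric] sum_distrib_right[symmetric])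
  also have "(\<Sum>i\<in>?V. \<Sum>j\<in>?V. ?d j * ?d i * \<phi> j i) = B"
    unfolding B_def by (rule sum.swap)
  also have "(\<Sum>i\<in>?V. \<Sum>j\<in>?V. ?d i * ?d j * \<phi> i j) = B"
    unfolding B_def ..
  finally show ?thesis
    by (simp add: Rstar_def sum_degree[OF H] A_def B_def)
qed

lemma sum_nbrs_green:
  assumes H: "simple_graph H" and r: "r \<in> fst H" and \<phi>: "green_function H r \<phi>"
  shows "(\<Sum>v\<in>fst H. \<Sum>w\<in>nbrs H v. \<phi> v w)
     = (\<Sum>v\<in>fst H. real (Defs.degree H v) * \<phi> v v) - (real (card (fst H)) - 1)"
proof -
  have "(\<Sum>v\<in>fst H. laplacian H (\<phi> v) v) = (\<Sum>v\<in>fst H. 1 - (if v = r then 1 else 0))"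
    using \<phi> by (simp add: green_function_def unit_current_def)
  also have "\<dots> = real (card (fst H)) - 1"
    using simple_graph_finite_vertices[OF H] r by (simp add: sum_subtractf)
  finally show ?thesis
    by (simp add: laplacian_def sum_subtractf degree_eq_card_nbrs[OF H] mult.commute)
qed

section \<open>Subdivision\<close>

definition mid :: "'a sv set \<Rightarrow> 'a sv" where
  "mid e = Mid (to_upair e)"

definition ends :: "'a sv \<Rightarrow> 'a sv set" where
  "ends u = (case u of Mid p \<Rightarrow> set_uprod p | Orig a \<Rightarrow> {})"

lemma to_upair_doubleton: "to_upair {a, b} = Upair a b"
  unfolding to_upair_def
proof (rule the_equality)
  show "p = Upair a b" if "set_uprod p = {a, b}" for p
    using that by (cases p) (auto simp: doubleton_eq_iff)
qed simp

lemma ends_mid: "ends (mid {a, b}) = {a, b}"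
  by (simp add: ends_def mid_def to_upair_doubleton)

lemma subdivision_eq:
  "subdivision H = (fst H \<union> mid ` snd H, {{u, mid e} | u e. e \<in> snd H \<and> u \<in> e})"
  by (simp add: subdivision_def mid_def)

locale subdivisible =
  fixes H :: "'a sv graph"
  assumes simple: "simple_graph H"
    and mid_fresh: "e \<in> snd H \<Longrightarrow> mid e \<notin> fst H"
begin

lemma ends_mid_edge: "e \<in> snd H \<Longrightarrow> ends (mid e) = e"
  using simple by (auto elim: simple_graph_edgeE simp: ends_mid)

lemma inj_on_mid: "inj_on mid (snd H)"
  by (rule inj_onI) (metis ends_mid_edge)

lemma vertices_subdivision: "fst (subdivision H) = fst H \<union> mid ` snd H"
  by (simp add: subdivision_eq)

lemma edges_subdivision: "snd (subdivision H) = {{u, mid e} | u e. e \<in> snd H \<and> u \<in> e}"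
  by (simp add: subdivision_eq)

lemma vertex_neq_mid: "v \<in> fst H \<Longrightarrow> e \<in> snd H \<Longrightarrow> v \<noteq> mid e"
  using mid_fresh by blast

lemma edge_subdivisionI: "e \<in> snd H \<Longrightarrow> u \<in> e \<Longrightarrow> {u, mid e} \<in> snd (subdivision H)"
  by (auto simp: edges_subdivision)

lemma nbrs_subdivision_vertex:
  assumes v: "v \<in> fst H"
  shows "nbrs (subdivision H) v = (\<lambda>w. mid {v, w}) ` nbrs H v"
proof (rule Set.set_eqI, rule iffI)
  fix x assume "x \<in> nbrs (subdivision H) v"
  then obtain u e where ue: "e \<in> snd H" "u \<in> e" "{v, x} = {u, mid e}"
    by (auto simp: nbrs_def edges_subdivision)
  then have "v = u" "x = mid e"
    using vertex_neq_mid[OF v ue(1)] by (auto simp: doubleton_eq_iff)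
  with ue obtain w where "e = {v, w}" "w \<in> nbrs H v"
    using edge_eq_insert_nbr[OF simple] by metis
  then show "x \<in> (\<lambda>w. mid {v, w}) ` nbrs H v"
    using \<open>x = mid e\<close> by blast
next
  fix x assume "x \<in> (\<lambda>w. mid {v, w}) ` nbrs H v"
  then obtain w where w: "w \<in> nbrs H v" "x = mid {v, w}" by blast
  then have "{v, w} \<in> snd H" by (simp add: nbrs_def)
  then show "x \<in> nbrs (subdivision H) v"
    using edge_subdivisionI[of "{v, w}" v] w by (auto simp: nbrs_def vertices_subdivision)
qed

lemma nbrs_subdivision_mid:
  assumes e: "e \<in> snd H"
  shows "nbrs (subdivision H) (mid e) = e"
proof (rule Set.set_eqI, rule iffI)
  fix x assume "x \<in> nbrs (subdivision H) (mid e)"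
  then obtain u e' where ue: "e' \<in> snd H" "u \<in> e'" "{mid e, x} = {u, mid e'}"
    by (auto simp: nbrs_def edges_subdivision)
  moreover have "mid e \<noteq> u"
    using vertex_neq_mid[OF simple_graph_edge_vertex[OF simple ue(1,2)] e] by simp
  ultimately have "mid e = mid e'" "x = u"
    by (auto simp: doubleton_eq_iff)
  then show "x \<in> e"
    using inj_on_mid e ue by (auto simp: inj_on_def)
next
  fix x assume "x \<in> e"
  then show "x \<in> nbrs (subdivision H) (mid e)"
    using edge_subdivisionI[OF e] simple_graph_edge_vertex[OF simple e]
    by (auto simp: nbrs_def vertices_subdivision insert_commute)
qed

lemma simple_subdivision: "simple_graph (subdivision H)"
  unfolding simple_graph_def
proof (intro conjI ballI)
  show "finite (fst (subdivision H))"
    using simple_graph_finite_vertices[OF simple] simple_graph_finite_edges[OF simple]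
    by (simp add: vertices_subdivision)
  fix f assume "f \<in> snd (subdivision H)"
  then obtain u e where ue: "e \<in> snd H" "u \<in> e" "f = {u, mid e}"
    by (auto simp: edges_subdivision)
  moreover have "u \<in> fst H"
    using simple_graph_edge_vertex[OF simple ue(1,2)] .
  ultimately show "\<exists>a b. f = {a, b} \<and> a \<noteq> b \<and> a \<in> fst (subdivision H) \<and> b \<in> fst (subdivision H)"
    using vertex_neq_mid
    by (intro exI[of _ u] exI[of _ "mid e"]) (auto simp: vertices_subdivision)
qed

lemma connected_subdivision:
  assumes conn: "connected_graph H"
  shows "connected_graph (subdivision H)"
proof -
  let ?R = "(adj (subdivision H))\<^sup>*\<^sup>*"
  have adj_mid: "adj (subdivision H) u (mid e)" "adj (subdivision H) (mid e) u"
    if "e \<in> snd H" "u \<in> e" for u e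
    using edge_subdivisionI[OF that] by (simp_all add: adj_def insert_commute)
  have lift: "?R a b" if "(adj H)\<^sup>*\<^sup>* a b" for a b
    using that
  proof (induction rule: rtranclp_induct)
    case (step y z)
    then have "{y, z} \<in> snd H" by (simp add: adj_def)
    with step.IH show ?case
      using adj_mid[of "{y, z}" y] adj_mid[of "{y, z}" z]
      by (meson insertI1 insertI2 singletonI rtranclp.rtrancl_into_rtrancl)
  qed simp
  have to_vertex: "\<exists>a\<in>fst H. ?R x a \<and> ?R a x" if x: "x \<in> fst (subdivision H)" for x
  proof (cases "x \<in> fst H")
    case False
    then obtain e where e: "e \<in> snd H" "x = mid e"
      using x unfolding vertices_subdivision by blast
    then obtain a b where "e = {a, b}" "a \<in> fst H"
      using simple by (auto elim: simple_graph_edgeE)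
    then show ?thesis
      using adj_mid[OF e(1), of a] e by blast
  qed blast
  show ?thesis
    unfolding connected_graph_def
  proof (intro conjI ballI)
    show "fst (subdivision H) \<noteq> {}"
      using conn by (auto simp: connected_graph_def vertices_subdivision)
    fix u v assume "u \<in> fst (subdivision H)" "v \<in> fst (subdivision H)"
    then obtain a b where "a \<in> fst H" "?R u a" "b \<in> fst H" "?R b v"
      using to_vertex by meson
    moreover from this have "?R a b"
      using conn lift by (simp add: connected_graph_def)
    ultimately show "?R u v"
      by (meson rtranclp_trans)
  qed
qed

lemma inj_on_mid_nbrs: "inj_on (\<lambda>w. mid {v, w}) (nbrs H v)"
proof (rule inj_onI)
  fix w w' assume w: "w \<in> nbrs H v" "w' \<in> nbrs H v" "mid {v, w} = mid {v, w'}"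
  then have "{v, w} = {v, w'}"
    using inj_on_mid by (auto simp: inj_on_def nbrs_def)
  then show "w = w'"
    using w self_notin_nbrs[OF simple, of v] by (auto simp: doubleton_eq_iff)
qed

lemma laplacian_subdivision_vertex:
  "v \<in> fst H \<Longrightarrow> laplacian (subdivision H) y v = (\<Sum>w\<in>nbrs H v. y v - y (mid {v, w}))"
  by (simp add: laplacian_def nbrs_subdivision_vertex sum.reindex[OF inj_on_mid_nbrs])

lemma laplacian_subdivision_mid:
  "e \<in> snd H \<Longrightarrow> laplacian (subdivision H) y (mid e) = (\<Sum>a\<in>e. y (mid e) - y a)"
  by (simp add: laplacian_def nbrs_subdivision_mid)

lemma degree_subdivision_vertex:
  "v \<in> fst H \<Longrightarrow> Defs.degree (subdivision H) v = Defs.degree H v"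
  by (simp add: degree_eq_card_nbrs[OF simple_subdivision] degree_eq_card_nbrs[OF simple]
      nbrs_subdivision_vertex card_image[OF inj_on_mid_nbrs])

lemma degree_subdivision_mid: "e \<in> snd H \<Longrightarrow> Defs.degree (subdivision H) (mid e) = 2"
  by (simp add: degree_eq_card_nbrs[OF simple_subdivision] nbrs_subdivision_mid
      simple_graph_card_edge[OF simple])

lemma sum_vertices_subdivision:
  "(\<Sum>u\<in>fst (subdivision H). f u) = (\<Sum>v\<in>fst H. f v) + (\<Sum>e\<in>snd H. f (mid e))"
proof -
  have "(\<Sum>u\<in>fst H \<union> mid ` snd H. f u) = (\<Sum>v\<in>fst H. f v) + (\<Sum>u\<in>mid ` snd H. f u)"
    using vertex_neq_mid simple_graph_finite_vertices[OF simple] simple_graph_finite_edges[OF simple]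
    by (intro sum.union_disjoint) auto
  then show ?thesis
    by (simp add: vertices_subdivision sum.reindex[OF inj_on_mid])
qed

lemma card_vertices_subdivision:
  "card (fst (subdivision H)) = card (fst H) + card (snd H)"
  using sum_vertices_subdivision[of "\<lambda>_. 1::nat"] by simp

lemma card_edges_subdivision: "card (snd (subdivision H)) = 2 * card (snd H)"
proof -
  have "bij_betw (\<lambda>(e, u). {u, mid e}) (Sigma (snd H) (\<lambda>e. e)) (snd (subdivision H))"
  proof (rule bij_betwI')
    fix p q assume "p \<in> Sigma (snd H) (\<lambda>e. e)" "q \<in> Sigma (snd H) (\<lambda>e. e)"
    then obtain e u e' u' where pq: "p = (e, u)" "q = (e', u')" "e \<in> snd H" "e' \<in> snd H"
      "u \<in> fst H" "u' \<in> fst H"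
      using simple_graph_edge_vertex[OF simple] by blast
    show "((\<lambda>(e, u). {u, mid e}) p = (\<lambda>(e, u). {u, mid e}) q) = (p = q)"
      using pq vertex_neq_mid inj_on_mid by (auto simp: doubleton_eq_iff inj_on_def)
  qed (auto simp: edges_subdivision)
  then have "card (snd (subdivision H)) = card (Sigma (snd H) (\<lambda>e. e))"
    by (simp add: bij_betw_same_card)
  also have "\<dots> = (\<Sum>e\<in>snd H. card e)"
    using simple_graph_finite_edges[OF simple] simple_graph_card_edge[OF simple]
    by (intro card_SigmaI) (auto intro: card_ge_0_finite)
  finally show ?thesis
    using simple_graph_card_edge[OF simple] by simp
qed

end

context subdivisible
begin

text \<open>Subdividing doubles every resistance, so a potential on \<open>H\<close> is doubled at the
  original vertices and interpolated linearly at the midpoints.\<close>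

definition lift_potential :: "('a sv \<Rightarrow> real) \<Rightarrow> 'a sv \<Rightarrow> real" where
  "lift_potential f w = (if w \<in> fst H then 2 * f w else (\<Sum>a\<in>ends w. f a))"

lemma lift_potential_vertex: "v \<in> fst H \<Longrightarrow> lift_potential f v = 2 * f v"
  by (simp add: lift_potential_def)

lemma lift_potential_mid: "e \<in> snd H \<Longrightarrow> lift_potential f (mid e) = (\<Sum>a\<in>e. f a)"
  by (simp add: lift_potential_def ends_mid_edge mid_fresh)

lemma lift_potential_sum: "lift_potential (\<lambda>x. \<Sum>i\<in>I. f i x) w = (\<Sum>i\<in>I. lift_potential (f i) w)"
  by (simp add: lift_potential_def sum_distrib_left sum.swap[of _ I])

lemma lift_potential_scale: "lift_potential (\<lambda>x. c * f x) w = c * lift_potential f w"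
  by (simp add: lift_potential_def sum_distrib_left)

lemma lift_potential_divide: "lift_potential (\<lambda>x. f x / c) w = lift_potential f w / c"
  by (simp add: lift_potential_def sum_divide_distrib)

lemma laplacian_lift_potential_vertex:
  assumes v: "v \<in> fst H"
  shows "laplacian (subdivision H) (lift_potential f) v = laplacian H f v"
proof -
  have "lift_potential f v - lift_potential f (mid {v, w}) = f v - f w" if "w \<in> nbrs H v" for w
  proof -
    have "{v, w} \<in> snd H" "w \<noteq> v"
      using that self_notin_nbrs[OF simple, of v] by (auto simp: nbrs_def)
    then show ?thesis by (simp add: lift_potential_mid lift_potential_vertex[OF v])
  qed
  then show ?thesis
    unfolding laplacian_subdivision_vertex[OF v] by (simp add: laplacian_def)
qed

lemma laplacian_lift_potential_mid:
  assumes e: "e \<in> snd H"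
  shows "laplacian (subdivision H) (lift_potential f) (mid e) = 0"
proof -
  have "laplacian (subdivision H) (lift_potential f) (mid e) = (\<Sum>a\<in>e. (\<Sum>b\<in>e. f b) - 2 * f a)"
    using simple_graph_edge_vertex[OF simple e]
    by (simp add: laplacian_subdivision_mid[OF e] lift_potential_mid[OF e] lift_potential_vertex)
  also have "\<dots> = 0"
    using simple_graph_card_edge[OF simple e] by (simp add: sum_subtractf sum_distrib_left)
  finally show ?thesis .
qed

lemma laplacian_mid_indicator_vertex:
  assumes e0: "e0 \<in> snd H" and v: "v \<in> fst H"
  shows "laplacian (subdivision H) (\<lambda>w. if w = mid e0 then c else 0) v = - (if v \<in> e0 then c else 0)"
proof -
  have "mid e0 \<in> nbrs (subdivision H) v \<longleftrightarrow> v \<in> e0"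
    using nbrs_sym[of "mid e0" "subdivision H" v] nbrs_sym[of v "subdivision H" "mid e0"]
      nbrs_subdivision_mid[OF e0] e0 v by (auto simp: vertices_subdivision)
  then show ?thesis
    using vertex_neq_mid[OF v e0] finite_nbrs[OF simple_subdivision]
    by (simp add: laplacian_def sum_negf sum.delta')
qed

lemma laplacian_mid_indicator_mid:
  assumes e0: "e0 \<in> snd H" and e: "e \<in> snd H"
  shows "laplacian (subdivision H) (\<lambda>w. if w = mid e0 then c else 0) (mid e)
           = (if e = e0 then 2 * c else 0)"
proof -
  have "mid e = mid e0 \<longleftrightarrow> e = e0"
    using inj_on_mid e e0 by (auto simp: inj_on_def)
  moreover have "a \<noteq> mid e0" if "a \<in> e" for a
    using vertex_neq_mid[OF simple_graph_edge_vertex[OF simple e that] e0] .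
  ultimately show ?thesis
    using simple_graph_card_edge[OF simple e] by (simp add: laplacian_subdivision_mid[OF e])
qed

text \<open>A unit current entering at the midpoint of \<open>e\<close> is split into two half-currents
  entering at the ends of \<open>e\<close>, corrected by the potential \<open>1/2\<close> of the midpoint itself.\<close>

definition green_subdivision :: "('a sv \<Rightarrow> 'a sv \<Rightarrow> real) \<Rightarrow> 'a sv \<Rightarrow> 'a sv \<Rightarrow> real" where
  "green_subdivision \<phi> u = (if u \<in> fst H then lift_potential (\<phi> u)
     else (\<lambda>w. lift_potential (\<lambda>x. (\<Sum>a\<in>ends u. \<phi> a x) / 2) w + (if w = u then 1 / 2 else 0)))"

lemma green_subdivision_vertex: "u \<in> fst H \<Longrightarrow> green_subdivision \<phi> u = lift_potential (\<phi> u)"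
  by (simp add: green_subdivision_def)

lemma green_subdivision_mid:
  "e \<in> snd H \<Longrightarrow> green_subdivision \<phi> (mid e)
     = (\<lambda>w. lift_potential (\<lambda>x. (\<Sum>a\<in>e. \<phi> a x) / 2) w + (if w = mid e then 1 / 2 else 0))"
  by (simp add: green_subdivision_def mid_fresh ends_mid_edge)

lemma laplacian_green_subdivision_mid:
  assumes r: "r \<in> fst H" and \<phi>: "green_function H r \<phi>"
    and e0: "e0 \<in> snd H" and w: "w \<in> fst (subdivision H)"
  shows "laplacian (subdivision H) (green_subdivision \<phi> (mid e0)) w = unit_current (mid e0) r w"
proof -
  let ?g = "\<lambda>x. (\<Sum>a\<in>e0. \<phi> a x) / 2"
  have split: "laplacian (subdivision H) (green_subdivision \<phi> (mid e0)) w
      = laplacian (subdivision H) (lift_potential ?g) w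
        + laplacian (subdivision H) (\<lambda>w. if w = mid e0 then 1 / 2 else 0) w"
    unfolding green_subdivision_mid[OF e0] by (rule laplacian_add)
  show ?thesis
  proof (cases "w \<in> fst H")
    case True
    have ends: "a \<in> fst H" if "a \<in> e0" for a
      using simple_graph_edge_vertex[OF simple e0 that] .
    have "laplacian H ?g w = (\<Sum>a\<in>e0. unit_current a r w) / 2"
      using \<phi> ends True
      by (simp add: laplacian_scale[of _ "1/2", simplified] laplacian_sum green_function_def)
    also have "\<dots> = (if w \<in> e0 then 1 / 2 else 0) - (if w = r then 1 else 0)"
      using simple_graph_card_edge[OF simple e0] card_ge_0_finite[of e0]
      by (simp add: unit_current_def sum_subtractf sum.delta')
    finally show ?thesis
      using split True vertex_neq_mid[OF True e0]
      by (simp add: laplacian_lift_potential_vertex laplacian_mid_indicator_vertex[OF e0] unit_current_def)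
  next
    case False
    then obtain e where e: "e \<in> snd H" "w = mid e"
      using w by (auto simp: vertices_subdivision)
    moreover have "w \<noteq> r" "w = mid e0 \<longleftrightarrow> e = e0"
      using False r e inj_on_mid e0 by (auto simp: inj_on_def)
    ultimately show ?thesis
      using split by (simp add: laplacian_lift_potential_mid laplacian_mid_indicator_mid[OF e0] unit_current_def)
  qed
qed

lemma green_function_subdivision:
  assumes r: "r \<in> fst H" and \<phi>: "green_function H r \<phi>"
  shows "green_function (subdivision H) r (green_subdivision \<phi>)"
  unfolding green_function_def
proof (intro ballI)
  fix u w assume u: "u \<in> fst (subdivision H)" and w: "w \<in> fst (subdivision H)"
  show "laplacian (subdivision H) (green_subdivision \<phi> u) w = unit_current u r w"
  proof (cases "u \<in> fst H")
    case True
    show ?thesis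
    proof (cases "w \<in> fst H")
      case False
      then obtain e where "e \<in> snd H" "w = mid e"
        using w by (auto simp: vertices_subdivision)
      moreover have "w \<noteq> u" "w \<noteq> r" using False True r by auto
      ultimately show ?thesis
        using True by (simp add: green_subdivision_vertex laplacian_lift_potential_mid unit_current_def)
    qed (use True \<phi> in \<open>simp add: green_subdivision_vertex laplacian_lift_potential_vertex green_function_def\<close>)
  next
    case False
    then obtain e0 where "e0 \<in> snd H" "u = mid e0"
      using u by (auto simp: vertices_subdivision)
    then show ?thesis
      using laplacian_green_subdivision_mid[OF r \<phi> _ w] by simp
  qed
qed

end

section \<open>The degree-Kirchhoff index of a subdivision\<close>

locale subdivision_green = subdivisible +
  fixes r :: "'a sv" and \<phi> :: "'a sv \<Rightarrow> 'a sv \<Rightarrow> real"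
  assumes connected: "connected_graph H" and ground: "r \<in> fst H"
    and green: "green_function H r \<phi>"
begin

lemma sum_edges_green_ends:
  "(\<Sum>e\<in>snd H. \<Sum>b\<in>e. \<Sum>a\<in>e. \<phi> a b)
     = 2 * (\<Sum>v\<in>fst H. real (Defs.degree H v) * \<phi> v v) - (real (card (fst H)) - 1)"
proof -
  have "(\<Sum>b\<in>{v, w}. \<Sum>a\<in>{v, w}. \<phi> a b) = \<phi> v v + \<phi> w w + (\<phi> v w + \<phi> w v)"
    if "w \<in> nbrs H v" for v w
  proof -
    have "v \<noteq> w" using that self_notin_nbrs[OF simple, of v] by blast
    then show ?thesis by simp
  qed
  then have "2 * (\<Sum>e\<in>snd H. \<Sum>b\<in>e. \<Sum>a\<in>e. \<phi> a b)
      = (\<Sum>v\<in>fst H. \<Sum>w\<in>nbrs H v. \<phi> v v + \<phi> w w + (\<phi> v w + \<phi> w v))"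
    by (simp add: sum_nbrs_eq_sum_edges[OF simple, symmetric])
  also have "\<dots> = 2 * (\<Sum>v\<in>fst H. \<Sum>w\<in>nbrs H v. \<phi> v v) + 2 * (\<Sum>v\<in>fst H. \<Sum>w\<in>nbrs H v. \<phi> v w)"
    using sum_nbrs_swap[OF simple, of "\<lambda>v w. \<phi> w w"] sum_nbrs_swap[OF simple, of "\<lambda>v w. \<phi> w v"]
    by (simp add: sum.distrib)
  finally show ?thesis
    using sum_degree_mult[OF simple, of "\<lambda>v. \<phi> v v"] sum_nbrs_green[OF simple ground green]
    by simp
qed

lemma sum_diagonal_green_subdivision:
  "(\<Sum>v\<in>fst (subdivision H). real (Defs.degree (subdivision H) v) * green_subdivision \<phi> v v)
     = 4 * (\<Sum>v\<in>fst H. real (Defs.degree H v) * \<phi> v v) - (real (card (fst H)) - 1)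
       + real (card (snd H))"
proof -
  have "(\<Sum>v\<in>fst H. real (Defs.degree (subdivision H) v) * green_subdivision \<phi> v v)
      = 2 * (\<Sum>v\<in>fst H. real (Defs.degree H v) * \<phi> v v)"
    by (simp add: sum_distrib_left degree_subdivision_vertex green_subdivision_vertex
        lift_potential_vertex mult.left_commute)
  moreover have "(\<Sum>e\<in>snd H. real (Defs.degree (subdivision H) (mid e)) * green_subdivision \<phi> (mid e) (mid e))
      = (\<Sum>e\<in>snd H. (\<Sum>b\<in>e. \<Sum>a\<in>e. \<phi> a b) + 1)"
    by (intro sum.cong refl)
      (simp add: degree_subdivision_mid green_subdivision_mid lift_potential_mid
        sum_divide_distrib[symmetric] algebra_simps)
  ultimately show ?thesis
    by (simp add: sum_vertices_subdivision sum.distrib sum_edges_green_ends)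
qed

lemma sum_row_green_subdivision:
  "(\<Sum>u\<in>fst (subdivision H). real (Defs.degree (subdivision H) u) * green_subdivision \<phi> u w)
     = 2 * lift_potential (\<lambda>x. \<Sum>v\<in>fst H. real (Defs.degree H v) * \<phi> v x) w
       + (if w \<in> mid ` snd H then 1 else 0)"
proof -
  let ?Psi = "\<lambda>x. \<Sum>v\<in>fst H. real (Defs.degree H v) * \<phi> v x"
  have "(\<Sum>v\<in>fst H. real (Defs.degree (subdivision H) v) * green_subdivision \<phi> v w)
      = lift_potential ?Psi w"
    by (simp add: degree_subdivision_vertex green_subdivision_vertex lift_potential_sum
        lift_potential_scale)
  moreover have "(\<Sum>e\<in>snd H. real (Defs.degree (subdivision H) (mid e)) * green_subdivision \<phi> (mid e) w)
      = (\<Sum>e\<in>snd H. lift_potential (\<lambda>x. \<Sum>a\<in>e. \<phi> a x) w + (if mid e = w then 1 else 0))"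
    by (intro sum.cong refl)
      (auto simp: degree_subdivision_mid green_subdivision_mid lift_potential_divide)
  moreover have "(\<Sum>e\<in>snd H. lift_potential (\<lambda>x. \<Sum>a\<in>e. \<phi> a x) w) = lift_potential ?Psi w"
    by (simp add: lift_potential_sum[symmetric] sum_edges_sum_ends[OF simple])
  moreover have "(\<Sum>e\<in>snd H. if mid e = w then 1 else 0) = (if w \<in> mid ` snd H then (1::real) else 0)"
  proof -
    have "(\<Sum>e\<in>snd H. if mid e = w then 1 else 0) = (\<Sum>x\<in>mid ` snd H. if x = w then (1::real) else 0)"
      by (simp add: sum.reindex[OF inj_on_mid])
    also have "\<dots> = (if w \<in> mid ` snd H then 1 else 0)"
      using simple_graph_finite_edges[OF simple] by (simp add: sum.delta)
    finally show ?thesis .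
  qed
  ultimately show ?thesis
    by (simp add: sum_vertices_subdivision sum.distrib)
qed

lemma sum_weighted_green_subdivision:
  "(\<Sum>u\<in>fst (subdivision H). \<Sum>w\<in>fst (subdivision H).
      real (Defs.degree (subdivision H) u) * real (Defs.degree (subdivision H) w) * green_subdivision \<phi> u w)
     = 8 * (\<Sum>u\<in>fst H. \<Sum>w\<in>fst H. real (Defs.degree H u) * real (Defs.degree H w) * \<phi> u w)
       + 2 * real (card (snd H))"
proof -
  let ?d = "\<lambda>v. real (Defs.degree H v)"
  let ?dS = "\<lambda>v. real (Defs.degree (subdivision H) v)"
  let ?Psi = "\<lambda>x. \<Sum>v\<in>fst H. ?d v * \<phi> v x"
  have "(\<Sum>u\<in>fst (subdivision H). \<Sum>w\<in>fst (subdivision H). ?dS u * ?dS w * green_subdivision \<phi> u w)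
      = (\<Sum>w\<in>fst (subdivision H). ?dS w * (\<Sum>u\<in>fst (subdivision H). ?dS u * green_subdivision \<phi> u w))"
    by (subst sum.swap) (simp add: sum_distrib_left algebra_simps)
  also have "\<dots> = (\<Sum>w\<in>fst (subdivision H). ?dS w * (2 * lift_potential ?Psi w
      + (if w \<in> mid ` snd H then 1 else 0)))"
    by (simp add: sum_row_green_subdivision)
  also have "\<dots> = (\<Sum>v\<in>fst H. ?dS v * (2 * lift_potential ?Psi v + (if v \<in> mid ` snd H then 1 else 0)))
      + (\<Sum>e\<in>snd H. ?dS (mid e) * (2 * lift_potential ?Psi (mid e) + (if mid e \<in> mid ` snd H then 1 else 0)))"
    by (rule sum_vertices_subdivision)
  also have "(\<Sum>v\<in>fst H. ?dS v * (2 * lift_potential ?Psi v + (if v \<in> mid ` snd H then 1 else 0)))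
      = (\<Sum>v\<in>fst H. 4 * (?d v * ?Psi v))"
  proof (rule sum.cong[OF refl])
    fix v assume "v \<in> fst H"
    moreover from this have "v \<notin> mid ` snd H" using vertex_neq_mid by blast
    ultimately show "?dS v * (2 * lift_potential ?Psi v + (if v \<in> mid ` snd H then 1 else 0))
        = 4 * (?d v * ?Psi v)"
      by (simp add: degree_subdivision_vertex lift_potential_vertex)
  qed
  also have "\<dots> = 4 * (\<Sum>v\<in>fst H. ?d v * ?Psi v)"
    by (rule sum_distrib_left[symmetric])
  also have "(\<Sum>e\<in>snd H. ?dS (mid e) * (2 * lift_potential ?Psi (mid e) + (if mid e \<in> mid ` snd H then 1 else 0)))
      = (\<Sum>e\<in>snd H. 4 * (\<Sum>a\<in>e. ?Psi a) + 2)"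
    by (intro sum.cong refl) (simp add: degree_subdivision_mid lift_potential_mid)
  also have "\<dots> = 4 * (\<Sum>e\<in>snd H. \<Sum>a\<in>e. ?Psi a) + 2 * real (card (snd H))"
    by (simp add: sum.distrib sum_distrib_left)
  also have "(\<Sum>e\<in>snd H. \<Sum>a\<in>e. ?Psi a) = (\<Sum>v\<in>fst H. ?d v * ?Psi v)"
    by (rule sum_edges_sum_ends[OF simple])
  also have "(\<Sum>v\<in>fst H. ?d v * ?Psi v) = (\<Sum>u\<in>fst H. \<Sum>w\<in>fst H. ?d u * ?d w * \<phi> u w)"
    by (subst sum.swap) (simp add: sum_distrib_left algebra_simps)
  finally show ?thesis by simp
qed

lemma Rstar_subdivision:
  "Rstar (subdivision H) = 8 * Rstar H
     + 2 * real (card (snd H)) * (2 * real (card (snd H)) - 2 * real (card (fst H)) + 1)"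
proof -
  define A where "A = (\<Sum>v\<in>fst H. real (Defs.degree H v) * \<phi> v v)"
  define B where "B = (\<Sum>u\<in>fst H. \<Sum>w\<in>fst H. real (Defs.degree H u) * real (Defs.degree H w) * \<phi> u w)"
  have "Rstar (subdivision H) = 2 * (2 * real (card (snd H)))
      * (4 * A - (real (card (fst H)) - 1) + real (card (snd H))) - (8 * B + 2 * real (card (snd H)))"
    using Rstar_green[OF simple_subdivision connected_subdivision[OF connected]
        green_function_subdivision[OF ground green]]
    by (simp only: card_edges_subdivision sum_diagonal_green_subdivision
        sum_weighted_green_subdivision A_def B_def of_nat_mult of_nat_numeral)
  moreover have "Rstar H = 2 * real (card (snd H)) * A - B"
    using Rstar_green[OF simple connected green] by (simp only: A_def B_def)
  ultimately show ?thesis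
    by (simp add: algebra_simps)
qed

end

lemma (in subdivisible) Rstar_subdivision:
  assumes "connected_graph H"
  shows "Rstar (subdivision H) = 8 * Rstar H
     + 2 * real (card (snd H)) * (2 * real (card (snd H)) - 2 * real (card (fst H)) + 1)"
proof -
  obtain r where r: "r \<in> fst H"
    using assms by (auto simp: connected_graph_def)
  then obtain \<phi> where "green_function H r \<phi>"
    using green_function_exists[OF simple assms] by blast
  then interpret subdivision_green H r \<phi>
    using assms r by unfold_locales
  show ?thesis by (rule Rstar_subdivision)
qed

section \<open>Relabelling vertices\<close>

definition relabel :: "('a \<Rightarrow> 'b) \<Rightarrow> 'a graph \<Rightarrow> 'b graph" where
  "relabel f G = (f ` fst G, (`) f ` snd G)"

lemma lift_graph_eq_relabel: "lift_graph G = relabel Orig G"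
  by (simp add: lift_graph_def relabel_def)

context
  fixes f :: "'a \<Rightarrow> 'b"
  assumes f: "inj f"
begin

lemma image_in_image_edges_iff: "f ` e \<in> (`) f ` E \<longleftrightarrow> e \<in> E"
  using f by (auto simp: inj_image_eq_iff)

lemma vertices_relabel: "fst (relabel f G) = f ` fst G"
  by (simp add: relabel_def)

lemma edge_relabel_iff: "{f u, f v} \<in> snd (relabel f G) \<longleftrightarrow> {u, v} \<in> snd G"
  using image_in_image_edges_iff[of "{u, v}"] by (simp add: relabel_def)

lemma simple_relabel: "simple_graph G \<Longrightarrow> simple_graph (relabel f G)"
  unfolding simple_graph_def relabel_def using f
  by (fastforce simp: inj_eq)

lemma connected_relabel:
  assumes conn: "connected_graph G"
  shows "connected_graph (relabel f G)"
proof -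
  have "(adj (relabel f G))\<^sup>*\<^sup>* (f a) (f b)" if "(adj G)\<^sup>*\<^sup>* a b" for a b
    using that
  proof (induction rule: rtranclp_induct)
    case (step y z)
    then show ?case
      by (meson adj_def edge_relabel_iff rtranclp.rtrancl_into_rtrancl)
  qed simp
  then show ?thesis
    using conn by (auto simp: connected_graph_def vertices_relabel)
qed

lemma nbrs_relabel: "nbrs (relabel f G) (f v) = f ` nbrs G v"
  by (auto simp: nbrs_def vertices_relabel edge_relabel_iff)

lemma laplacian_relabel: "laplacian (relabel f G) y (f v) = laplacian G (y \<circ> f) v"
  using f by (simp add: laplacian_def nbrs_relabel sum.reindex inj_on_subset[OF f])

lemma degree_relabel:
  "simple_graph G \<Longrightarrow> Defs.degree (relabel f G) (f v) = Defs.degree G v"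
  by (simp add: degree_eq_card_nbrs simple_relabel nbrs_relabel card_image inj_on_subset[OF f])

lemma resistance_relabel:
  assumes G: "simple_graph G" and conn: "connected_graph G" and ij: "i \<in> fst G" "j \<in> fst G"
  shows "resistance (relabel f G) (f i) (f j) = resistance G i j"
proof -
  obtain x where x: "\<forall>v\<in>fst G. laplacian G x v = unit_current i j v"
    using unit_current_potential_exists[OF G conn ij] by blast
  have "unit_current (f i) (f j) (f v) = unit_current i j v" for v
    by (simp add: unit_current_def inj_eq[OF f])
  then have "\<forall>v\<in>fst (relabel f G). laplacian (relabel f G) (x \<circ> the_inv f) v = unit_current (f i) (f j) v"
    using x f by (auto simp: vertices_relabel laplacian_relabel comp_def the_inv_f_f)
  from resistance_eqI[OF simple_relabel[OF G] connected_relabel[OF conn] _ _ this]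
  have "resistance (relabel f G) (f i) (f j) = x i - x j"
    using ij f by (simp add: vertices_relabel the_inv_f_f)
  also have "\<dots> = resistance G i j"
    using resistance_eqI[OF G conn ij x] by simp
  finally show ?thesis .
qed

lemma Rstar_relabel:
  assumes G: "simple_graph G" and conn: "connected_graph G"
  shows "Rstar (relabel f G) = Rstar G"
proof -
  let ?P = "{(i, j). i \<in> fst G \<and> j \<in> fst G \<and> i \<noteq> j}"
  let ?P' = "{(i, j). i \<in> fst (relabel f G) \<and> j \<in> fst (relabel f G) \<and> i \<noteq> j}"
  have "?P' = map_prod f f ` ?P"
  proof (rule Set.set_eqI, rule iffI)
    fix p assume "p \<in> ?P'"
    then obtain a b where "p = (f a, f b)" "a \<in> fst G" "b \<in> fst G" "a \<noteq> b"
      by (auto simp: vertices_relabel)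
    then show "p \<in> map_prod f f ` ?P"
      by (intro image_eqI[of _ _ "(a, b)"]) auto
  next
    fix p assume "p \<in> map_prod f f ` ?P"
    then show "p \<in> ?P'"
      by (auto simp: vertices_relabel inj_eq[OF f])
  qed
  moreover have "inj_on (map_prod f f) ?P"
    by (auto simp: inj_on_def inj_eq[OF f])
  ultimately have "(\<Sum>(i, j)\<in>?P'. real (Defs.degree (relabel f G) i) * real (Defs.degree (relabel f G) j)
        * resistance (relabel f G) i j)
      = (\<Sum>(i, j)\<in>?P. real (Defs.degree G i) * real (Defs.degree G j) * resistance G i j)"
    by (simp add: sum.reindex degree_relabel[OF G] resistance_relabel[OF G conn] case_prod_unfold)
  then show ?thesis
    by (simp only: Rstar_def)
qed

lemma card_vertices_relabel: "card (fst (relabel f G)) = card (fst G)"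
  by (simp add: vertices_relabel card_image inj_on_subset[OF f])

lemma card_edges_relabel: "card (snd (relabel f G)) = card (snd G)"
  by (simp add: relabel_def card_image inj_on_def image_in_image_edges_iff inj_image_eq_iff[OF f])

end

section \<open>Iterated subdivision\<close>

text \<open>\<open>rank v\<close> is the round of subdivision in which the vertex \<open>v\<close> was created.  In \<open>S^k(G)\<close>
  every edge has an end created in round \<open>k\<close>, so the new midpoints are fresh.\<close>

primrec rank :: "'a sv \<Rightarrow> nat" where
  "rank (Orig a) = 0"
| "rank (Mid p) = Suc (Max (set_uprod (map_uprod rank p)))"

definition layered :: "'a sv graph \<Rightarrow> nat \<Rightarrow> bool" where
  "layered H k \<longleftrightarrow> (\<forall>v\<in>fst H. rank v \<le> k) \<and> (\<forall>e\<in>snd H. \<exists>v\<in>e. rank v = k)"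

lemma rank_mid: "rank (mid {a, b}) = Suc (max (rank a) (rank b))"
  by (simp add: mid_def to_upair_doubleton)

lemma rank_mid_edge:
  assumes H: "simple_graph H" and lay: "layered H k" and e: "e \<in> snd H"
  shows "rank (mid e) = Suc k"
proof -
  obtain a b where "e = {a, b}" "a \<in> fst H" "b \<in> fst H"
    using H e by (auto elim: simple_graph_edgeE)
  moreover have "rank a \<le> k" "rank b \<le> k" "rank a = k \<or> rank b = k"
    using lay e calculation by (auto simp: layered_def)
  ultimately show ?thesis
    by (auto simp: rank_mid max_def)
qed

lemma layered_subdivisible:
  assumes H: "simple_graph H" and lay: "layered H k"
  shows "subdivisible H"
proof
  fix e assume "e \<in> snd H"
  then have "rank (mid e) = Suc k" by (rule rank_mid_edge[OF H lay])
  then show "mid e \<notin> fst H"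
    using lay by (auto simp: layered_def)
qed (rule H)

lemma layered_subdivision:
  assumes H: "simple_graph H" and lay: "layered H k"
  shows "layered (subdivision H) (Suc k)"
proof -
  interpret subdivisible H using layered_subdivisible[OF H lay] .
  show ?thesis
    using lay rank_mid_edge[OF H lay]
    by (fastforce simp: layered_def vertices_subdivision edges_subdivision)
qed

lemma layered_lift_graph: "simple_graph G \<Longrightarrow> layered (lift_graph G) 0"
  by (auto simp: layered_def lift_graph_def simple_graph_def)

lemma inj_Orig: "inj Orig"
  by (simp add: inj_def)

lemma iter_subdivision_Suc: "iter_subdivision (Suc k) G = subdivision (iter_subdivision k G)"
  by (simp add: iter_subdivision_def)

lemma iter_subdivision_invariants:
  assumes G: "simple_graph G" and conn: "connected_graph G"
  shows "simple_graph (iter_subdivision k G) \<and> connected_graph (iter_subdivision k G)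
           \<and> layered (iter_subdivision k G) k"
proof (induction k)
  case 0
  show ?case
    using simple_relabel[OF inj_Orig G] connected_relabel[OF inj_Orig conn] layered_lift_graph[OF G]
    by (simp add: iter_subdivision_def lift_graph_eq_relabel)
next
  case (Suc k)
  then interpret subdivisible "iter_subdivision k G"
    using layered_subdivisible by blast
  show ?case
    using Suc simple_subdivision connected_subdivision layered_subdivision[of "iter_subdivision k G" k]
    by (simp add: iter_subdivision_Suc)
qed

lemma card_iter_subdivision:
  assumes G: "simple_graph G" and conn: "connected_graph G"
  shows "real (card (snd (iter_subdivision k G))) = 2 ^ k * real (card (snd G))"
    and "real (card (fst (iter_subdivision k G))) = real (card (fst G)) + (2 ^ k - 1) * real (card (snd G))"
proof (induction k)
  case 0
  show "real (card (snd (iter_subdivision 0 G))) = 2 ^ 0 * real (card (snd G))"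
    "real (card (fst (iter_subdivision 0 G))) = real (card (fst G)) + (2 ^ 0 - 1) * real (card (snd G))"
    by (simp_all add: iter_subdivision_def lift_graph_eq_relabel card_edges_relabel[OF inj_Orig] card_vertices_relabel[OF inj_Orig])
next
  case (Suc k)
  interpret subdivisible "iter_subdivision k G"
    using iter_subdivision_invariants[OF G conn] layered_subdivisible by blast
  show "real (card (snd (iter_subdivision (Suc k) G))) = 2 ^ Suc k * real (card (snd G))"
    "real (card (fst (iter_subdivision (Suc k) G))) = real (card (fst G)) + (2 ^ Suc k - 1) * real (card (snd G))"
    using Suc by (simp_all add: iter_subdivision_Suc card_edges_subdivision card_vertices_subdivision algebra_simps)
qed

lemma Rstar_iter_subdivision_Suc:
  assumes G: "simple_graph G" and conn: "connected_graph G"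
  shows "Rstar (iter_subdivision (Suc k) G) = 8 * Rstar (iter_subdivision k G)
           + 2 ^ Suc k * real (card (snd G)) * (2 * real (card (snd G)) - 2 * real (card (fst G)) + 1)"
proof -
  let ?H = "iter_subdivision k G"
  interpret subdivisible ?H
    using iter_subdivision_invariants[OF G conn] layered_subdivisible by blast
  have "Rstar (subdivision ?H) = 8 * Rstar ?H
      + 2 * real (card (snd ?H)) * (2 * real (card (snd ?H)) - 2 * real (card (fst ?H)) + 1)"
    using Rstar_subdivision iter_subdivision_invariants[OF G conn] by blast
  then show ?thesis
    unfolding iter_subdivision_Suc card_iter_subdivision[OF G conn]
    by (simp add: algebra_simps)
qed

theorem theorem3p2:
  fixes G :: "'a graph" and k :: nat
  assumes "simple_graph G" and "connected_graph G" and "card (fst G) \<ge> 2"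
  shows "Rstar (iter_subdivision k G) =
           8 ^ k * Rstar G
           + (8 ^ k - 2 ^ k) / 3 * real (card (snd G))
               * (2 * real (card (snd G)) - 2 * real (card (fst G)) + 1)"
proof (induction k)
  case 0
  show ?case
    using Rstar_relabel[OF inj_Orig assms(1,2)] by (simp add: iter_subdivision_def lift_graph_eq_relabel)
next
  case (Suc k)
  let ?m = "real (card (snd G))"
  let ?c = "2 * real (card (snd G)) - 2 * real (card (fst G)) + 1"
  have "Rstar (iter_subdivision (Suc k) G) = 8 * Rstar (iter_subdivision k G) + 2 ^ Suc k * ?m * ?c"
    by (rule Rstar_iter_subdivision_Suc[OF assms(1,2)])
  also have "\<dots> = 8 * (8 ^ k * Rstar G + (8 ^ k - 2 ^ k) / 3 * ?m * ?c) + 2 ^ Suc k * ?m * ?c"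
    by (simp only: Suc)
  also have "\<dots> = 8 ^ Suc k * Rstar G + (8 * ((8 ^ k - 2 ^ k) / 3) + 2 ^ Suc k) * ?m * ?c"
    by (simp only: power_Suc algebra_simps)
  also have "8 * ((8 ^ k - 2 ^ k) / 3) + 2 ^ Suc k = (8 ^ Suc k - 2 ^ Suc k :: real) / 3"
    by (simp add: field_simps)
  finally show ?case .
qed

end
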